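(* For a complete residuated lattice $L=(L,* )$ the following are equivalent: (i) $L$ satisfies the law of double negation, i.e. $(a\to0)\to0=a$ for all $a\in L$; (ii) for every $L$-context $(X,Y,\phi)$ and all $X'\subseteq X$, $Y'\subseteq Y$: $(X',Y',(\neg\phi)_{X',Y'})$ is a reduct of $(X,Y,\neg\phi)$ in RST if and only if $(X',Y',\phi_{X',Y'})$ is a reduct of $(X,Y,\phi)$ in FCA; (iii) for every $L$-context $(X,Y,\phi)$ and all $X'\subseteq X$, $Y'\subseteq Y$: if $(X',Y',(\neg\phi)_{X',Y'})$ is a reduct of $(X,Y,\neg\phi)$ in RST, then $(X',Y',\phi_{X',Y'})$ is a reduct of $(X,Y,\phi)$ in FCA.
   Context: $L=(L,* )$ is a complete residuated lattice: a complete lattice with bottom $0$ and top $1$, with a commutative associative operation $*$ with unit $1$ satisfying $a*\bigvee_i b_i=\bigvee_i a*b_i$; $\to$ is its residuum ($a*b\le c\iff a\le b\to c$); $\neg a=a\to 0$. An $L$-context is $(X,Y,\phi)$ with $X,Y$ sets and $\phi\colon X\times Y\to L$; $(\neg\phi)(x,y)=\neg\phi(x,y)$. $L^X$ is the set of maps $X\to L$ with $L$-order $L^X(\mu,\mu')=\bigwedge_x(\mu(x)\to\mu'(x))$. For $\mu\in L^X$, $\lambda\in L^Y$: $(\phi^\uparrow\mu)(y)=\bigwedge_{x}(\mu(x)\to\phi(x,y))$, $(\phi^\downarrow\lambda)(x)=\bigwedge_{y}(\lambda(y)\to\phi(x,y))$, $(\phi^\exists\mu)(y)=\bigvee_x\mu(x)*\phi(x,y)$,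 $(\phi^\forall\lambda)(x)=\bigwedge_y(\phi(x,y)\to\lambda(y))$. $\mathcal{M}\phi=\{\mu\in L^X\mid\phi^\downarrow\phi^\uparrow\mu=\mu\}$, $\mathcal{K}\phi=\{\mu\in L^X\mid\phi^\forall\phi^\exists\mu=\mu\}$, both with the $L$-order inherited from $L^X$. For $X'\subseteq X$, $Y'\subseteq Y$: $\phi_{X',Y'}$ is the restriction of $\phi$ to $X'\times Y'$; $\mu_{X'}$ the restriction of $\mu\in L^X$; $\underline{\mu'}\in L^X$ the extension of $\mu'\in L^{X'}$ by $0$. An isomorphism of complete $L$-lattices is an $L$-isometric bijection ($P(p,p')=Q(fp,fp')$). Reduct in FCA: $(X',Y',\phi_{X',Y'})$ is a reduct of $(X,Y,\phi)$ in FCA if the map $E_1\colon\mathcal{M}\phi_{X',Y'}\to\mathcal{M}\phi$, $\mu'\mapsto\phi^\downarrow\phi^\uparrow\underline{\mu'}$, is an isomorphism of complete $L$-lattices (it is known that this is equivalent to each of $R_1\mu=(\phi_{X',Y'})^\downarrow(\phi_{X',Y'})^\uparrow\mu_{X'}$, $R_2\mu=((\phi_{X,Y'})^\downarrow(\phi_{X,Y'})^\uparrow\mu)_{X'}$, $E_2\mu'=(\phi_{X,Y'})^\downarrow(\phi_{X,Y'})^\uparrow\underline{\mu'}$ being an isomorphism, and to: for every $\mu\in L^X$ there is $\mu'\in L^{X'}$ with $\phi^\uparrow\mu=(\phi_{X',Y})^\uparrow\mu'$, and for every $\lambda\in L^Y$ there is $\lambda'\in L^{Y'}$ with $\phi^\downarrow\lambda=(\phi_{X,Y'})^\downarrow\lambda'$).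 Reduct in RST: $(X',Y',\psi_{X',Y'})$ is a reduct of $(X,Y,\psi)$ in RST if the map $F_1\colon\mathcal{K}\psi_{X',Y'}\to\mathcal{K}\psi$, $\mu'\mapsto\psi^\forall\psi^\exists\underline{\mu'}$, is an isomorphism of complete $L$-lattices (equivalently, any one of $S_1\mu=(\psi_{X',Y'})^\forall(\psi_{X',Y'})^\exists\mu_{X'}$, $S_2\mu=((\psi_{X,Y'})^\forall(\psi_{X,Y'})^\exists\mu)_{X'}$, $F_2\mu'=(\psi_{X,Y'})^\forall(\psi_{X,Y'})^\exists\underline{\mu'}$ is an isomorphism). *)

theory Defs
  imports Main
begin

text \<open>A complete residuated lattice: the carrier is the complete lattice type 'l
  (bottom 0 = bot, top 1 = top), m is the multiplication, imp its residuum.\<close>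
definition complete_residuated_lattice ::
  "('l::complete_lattice \<Rightarrow> 'l \<Rightarrow> 'l) \<Rightarrow> ('l \<Rightarrow> 'l \<Rightarrow> 'l) \<Rightarrow> bool" where
  "complete_residuated_lattice m imp \<longleftrightarrow>
     (\<forall>a b. m a b = m b a) \<and>
     (\<forall>a b c. m (m a b) c = m a (m b c)) \<and>
     (\<forall>a. m a top = a) \<and>
     (\<forall>a B. m a (Sup B) = (SUP b\<in>B. m a b)) \<and>
     (\<forall>a b c. m a b \<le> c \<longleftrightarrow> a \<le> imp b c)"

definition neg :: "('l::complete_lattice \<Rightarrow> 'l \<Rightarrow> 'l) \<Rightarrow> 'l \<Rightarrow> 'l" where
  "neg imp a = imp a bot"

text \<open>Elements of L^X are represented by functions that are bot outside X.
  In particular, for X' \<subseteq> X, an element of L^X' is literally its extension by 0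
  to an element of L^X.\<close>
definition LFun :: "'x set \<Rightarrow> ('x \<Rightarrow> 'l::complete_lattice) set" where
  "LFun X = {\<mu>. \<forall>x. x \<notin> X \<longrightarrow> \<mu> x = bot}"

definition LOrd :: "('l::complete_lattice \<Rightarrow> 'l \<Rightarrow> 'l) \<Rightarrow> 'x set \<Rightarrow> ('x \<Rightarrow> 'l) \<Rightarrow> ('x \<Rightarrow> 'l) \<Rightarrow> 'l" where
  "LOrd imp X \<mu> \<mu>' = (INF x\<in>X. imp (\<mu> x) (\<mu>' x))"

definition up :: "('l::complete_lattice \<Rightarrow> 'l \<Rightarrow> 'l) \<Rightarrow> 'x set \<Rightarrow> 'y set \<Rightarrow> ('x \<Rightarrow> 'y \<Rightarrow> 'l)
    \<Rightarrow> ('x \<Rightarrow> 'l) \<Rightarrow> ('y \<Rightarrow> 'l)" where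
  "up imp X Y \<phi> \<mu> = (\<lambda>y. if y \<in> Y then (INF x\<in>X. imp (\<mu> x) (\<phi> x y)) else bot)"

definition down :: "('l::complete_lattice \<Rightarrow> 'l \<Rightarrow> 'l) \<Rightarrow> 'x set \<Rightarrow> 'y set \<Rightarrow> ('x \<Rightarrow> 'y \<Rightarrow> 'l)
    \<Rightarrow> ('y \<Rightarrow> 'l) \<Rightarrow> ('x \<Rightarrow> 'l)" where
  "down imp X Y \<phi> la = (\<lambda>x. if x \<in> X then (INF y\<in>Y. imp (la y) (\<phi> x y)) else bot)"

definition ex :: "('l::complete_lattice \<Rightarrow> 'l \<Rightarrow> 'l) \<Rightarrow> 'x set \<Rightarrow> 'y set \<Rightarrow> ('x \<Rightarrow> 'y \<Rightarrow> 'l)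
    \<Rightarrow> ('x \<Rightarrow> 'l) \<Rightarrow> ('y \<Rightarrow> 'l)" where
  "ex m X Y \<phi> \<mu> = (\<lambda>y. if y \<in> Y then (SUP x\<in>X. m (\<mu> x) (\<phi> x y)) else bot)"

definition all :: "('l::complete_lattice \<Rightarrow> 'l \<Rightarrow> 'l) \<Rightarrow> 'x set \<Rightarrow> 'y set \<Rightarrow> ('x \<Rightarrow> 'y \<Rightarrow> 'l)
    \<Rightarrow> ('y \<Rightarrow> 'l) \<Rightarrow> ('x \<Rightarrow> 'l)" where
  "all imp X Y \<phi> la = (\<lambda>x. if x \<in> X then (INF y\<in>Y. imp (\<phi> x y) (la y)) else bot)"

definition Mset :: "('l::complete_lattice \<Rightarrow> 'l \<Rightarrow> 'l) \<Rightarrow> 'x set \<Rightarrow> 'y set \<Rightarrow> ('x \<Rightarrow> 'y \<Rightarrow> 'l)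
    \<Rightarrow> ('x \<Rightarrow> 'l) set" where
  "Mset imp X Y \<phi> = {\<mu> \<in> LFun X. down imp X Y \<phi> (up imp X Y \<phi> \<mu>) = \<mu>}"

definition Kset :: "('l::complete_lattice \<Rightarrow> 'l \<Rightarrow> 'l) \<Rightarrow> ('l \<Rightarrow> 'l \<Rightarrow> 'l) \<Rightarrow> 'x set \<Rightarrow> 'y set
    \<Rightarrow> ('x \<Rightarrow> 'y \<Rightarrow> 'l) \<Rightarrow> ('x \<Rightarrow> 'l) set" where
  "Kset m imp X Y \<psi> = {\<mu> \<in> LFun X. all imp X Y \<psi> (ex m X Y \<psi> \<mu>) = \<mu>}"

definition L_iso :: "('l::complete_lattice \<Rightarrow> 'l \<Rightarrow> 'l) \<Rightarrow> 'x set \<Rightarrow> 'x set \<Rightarrow> ('x \<Rightarrow> 'l) set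
    \<Rightarrow> ('x \<Rightarrow> 'l) set \<Rightarrow> (('x \<Rightarrow> 'l) \<Rightarrow> ('x \<Rightarrow> 'l)) \<Rightarrow> bool" where
  "L_iso imp X' X A B f \<longleftrightarrow> bij_betw f A B \<and>
     (\<forall>p\<in>A. \<forall>p'\<in>A. LOrd imp X' p p' = LOrd imp X (f p) (f p'))"

text \<open>Reduct in FCA: E1 : M(phi_{X',Y'}) \<rightarrow> M(phi), mu' \<mapsto> phi^down phi^up (mu' extended by 0).\<close>
definition FCA_reduct :: "('l::complete_lattice \<Rightarrow> 'l \<Rightarrow> 'l) \<Rightarrow> 'x set \<Rightarrow> 'y set \<Rightarrow> ('x \<Rightarrow> 'y \<Rightarrow> 'l)
    \<Rightarrow> 'x set \<Rightarrow> 'y set \<Rightarrow> bool" where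
  "FCA_reduct imp X Y \<phi> X' Y' \<longleftrightarrow>
     L_iso imp X' X (Mset imp X' Y' \<phi>) (Mset imp X Y \<phi>) (\<lambda>\<mu>'. down imp X Y \<phi> (up imp X Y \<phi> \<mu>'))"

text \<open>Reduct in RST: F1 : K(psi_{X',Y'}) \<rightarrow> K(psi), mu' \<mapsto> psi^forall psi^exists (mu' extended by 0).\<close>
definition RST_reduct :: "('l::complete_lattice \<Rightarrow> 'l \<Rightarrow> 'l) \<Rightarrow> ('l \<Rightarrow> 'l \<Rightarrow> 'l) \<Rightarrow> 'x set \<Rightarrow> 'y set
    \<Rightarrow> ('x \<Rightarrow> 'y \<Rightarrow> 'l) \<Rightarrow> 'x set \<Rightarrow> 'y set \<Rightarrow> bool" where
  "RST_reduct m imp X Y \<psi> X' Y' \<longleftrightarrow>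
     L_iso imp X' X (Kset m imp X' Y' \<psi>) (Kset m imp X Y \<psi>) (\<lambda>\<mu>'. all imp X Y \<psi> (ex m X Y \<psi> \<mu>'))"

end

theory Submission
  imports Defs
begin

(*
  Under the law of double negation, contraposition (b -> c = neg c -> neg b) and
  neg (SUP x. mu x * neg (phi x y)) = (INF x. mu x -> phi x y) turn the closure operator
  (neg phi)^forall (neg phi)^exists into phi^down phi^up, so the two notions of reduct
  coincide literally.

  Conversely, suppose neg (neg a) /= a. Take objects 0, 1, one attribute 0, phi(0,0) = 0,
  phi(1,0) = a, and delete object 1. The RST-closed sets of neg phi are the pairs
  (l, neg a -> l), determined by their value at object 0, so this is always an RST reduct.
  The FCA extent (neg a, 1) of the intent a, however, is not generated by object 0 alone:
  such extents have the form (neg t, t -> a) with t a negation, and t <= a together with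
  neg t = neg a would give neg (neg a) = t <= a.
*)

lemma eq_by_lower_bounds:
  assumes "\<And>z. z \<le> x \<longleftrightarrow> z \<le> y"
  shows "x = (y::'a::order)"
  using assms[of x] assms[of y] by (simp add: order.antisym)

locale residuated_lattice =
  fixes m imp :: "'l::complete_lattice \<Rightarrow> 'l \<Rightarrow> 'l"
  assumes crl: "complete_residuated_lattice m imp"
begin

lemma mult_commute: "m a b = m b a"
  using crl unfolding complete_residuated_lattice_def by blast

lemma mult_assoc: "m (m a b) c = m a (m b c)"
  using crl unfolding complete_residuated_lattice_def by blast

lemma mult_top_right: "m a top = a"
  using crl unfolding complete_residuated_lattice_def by blast

lemma mult_Sup_right: "m a (Sup B) = (SUP b\<in>B. m a b)"
  using crl unfolding complete_residuated_lattice_def by blast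

lemma residuation: "m a b \<le> c \<longleftrightarrow> a \<le> imp b c"
  using crl unfolding complete_residuated_lattice_def by blast

lemma modus_ponens: "m (imp b c) b \<le> c"
  by (simp add: residuation)

lemma imp_swap: "a \<le> imp b c \<longleftrightarrow> b \<le> imp a c"
  by (metis residuation mult_commute)

lemma mult_mono_right: "a \<le> b \<Longrightarrow> m c a \<le> m c b"
  using mult_Sup_right[of c "{a, b}"] by (simp add: sup_absorb2 le_iff_sup)

lemma mult_bot_left: "m bot a = bot"
  using mult_Sup_right[of a "{}"] by (simp add: mult_commute)

lemma imp_top_left: "imp top b = b"
  by (rule eq_by_lower_bounds) (simp add: residuation[symmetric] mult_top_right)

lemma imp_self: "imp b b = top"
  using imp_swap[of top b b] by (simp add: imp_top_left top_unique)

lemma imp_bot_left: "imp bot b = top"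
  using residuation[of top bot b] by (simp add: mult_commute mult_bot_left top_unique)

lemma imp_Sup_left: "imp (Sup B) c = (INF b\<in>B. imp b c)"
  by (rule eq_by_lower_bounds) (simp add: residuation[symmetric] mult_Sup_right SUP_le_iff le_INF_iff)

lemma imp_mult_left: "imp (m a b) c = imp a (imp b c)"
  by (rule eq_by_lower_bounds) (simp add: residuation[symmetric] mult_assoc)

lemma imp_le_prefix: "imp b c \<le> imp (imp e b) (imp e c)"
proof -
  have "m (m (imp b c) (imp e b)) e = m (imp b c) (m (imp e b) e)" by (rule mult_assoc)
  also have "\<dots> \<le> m (imp b c) b" by (rule mult_mono_right[OF modus_ponens])
  also have "\<dots> \<le> c" by (rule modus_ponens)
  finally show ?thesis by (simp add: residuation)
qed

lemma neg_mult: "neg imp (m a b) = imp a (neg imp b)"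
  unfolding neg_def by (rule imp_mult_left)

lemma neg_Sup: "neg imp (Sup B) = (INF b\<in>B. neg imp b)"
  unfolding neg_def by (rule imp_Sup_left)

lemma double_neg_ge: "a \<le> neg imp (neg imp a)"
  unfolding neg_def by (rule imp_swap[THEN iffD2]) simp

lemma neg_antimono:
  assumes "b \<le> c"
  shows "neg imp c \<le> neg imp b"
proof -
  have "m (neg imp c) b \<le> m (neg imp c) c"
    using assms by (rule mult_mono_right)
  also have "\<dots> \<le> bot"
    unfolding neg_def by (rule modus_ponens)
  finally show ?thesis
    by (simp add: neg_def residuation)
qed

lemma triple_neg: "neg imp (neg imp (neg imp a)) = neg imp a"
  by (rule order.antisym[OF neg_antimono[OF double_neg_ge] double_neg_ge])

lemma imp_le_contrapos: "imp b c \<le> imp (neg imp c) (neg imp b)"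
  unfolding neg_def using imp_le_prefix[of c bot b] by (simp add: imp_swap)

lemma imp_neg_contrapos:
  assumes double_neg: "\<And>a. neg imp (neg imp a) = a"
  shows "imp (neg imp b) c = imp (neg imp c) b"
  using imp_le_contrapos[of "neg imp b" c] imp_le_contrapos[of "neg imp c" b]
  by (simp add: double_neg order.antisym)

lemma all_ex_neg_eq_down_up:
  assumes double_neg: "\<And>a. neg imp (neg imp a) = a"
  shows "all imp X Y (\<lambda>x y. neg imp (\<phi> x y)) (ex m X Y (\<lambda>x y. neg imp (\<phi> x y)) \<mu>)
    = down imp X Y \<phi> (up imp X Y \<phi> \<mu>)"
proof -
  have "imp (neg imp (\<phi> x y)) (SUP x'\<in>X. m (\<mu> x') (neg imp (\<phi> x' y)))
      = imp (INF x'\<in>X. imp (\<mu> x') (\<phi> x' y)) (\<phi> x y)" for x y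
    by (subst imp_neg_contrapos[OF double_neg]) (simp add: neg_Sup image_comp neg_mult double_neg)
  then show ?thesis
    by (intro ext) (simp add: all_def down_def ex_def up_def cong: INF_cong)
qed

lemma RST_reduct_neg_iff_FCA_reduct:
  assumes "\<And>a. neg imp (neg imp a) = a"
  shows "RST_reduct m imp X Y (\<lambda>x y. neg imp (\<phi> x y)) X' Y' \<longleftrightarrow> FCA_reduct imp X Y \<phi> X' Y'"
  unfolding RST_reduct_def FCA_reduct_def Kset_def Mset_def all_ex_neg_eq_down_up[OF assms] ..

end

definition two_object_context :: "'l::complete_lattice \<Rightarrow> nat \<Rightarrow> nat \<Rightarrow> 'l" where
  "two_object_context a x y = (if x = 0 then bot else a)"

lemma bij_betw_LFun_singleton: "bij_betw (\<lambda>\<mu>. \<mu> x) (LFun {x}) UNIV"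
proof (rule bij_betwI')
  show "\<mu> x = \<nu> x \<longleftrightarrow> \<mu> = \<nu>" if "\<mu> \<in> LFun {x}" "\<nu> \<in> LFun {x}" for \<mu> \<nu>
  proof
    assume "\<mu> x = \<nu> x"
    show "\<mu> = \<nu>"
    proof
      show "\<mu> z = \<nu> z" for z
        using that \<open>\<mu> x = \<nu> x\<close> unfolding LFun_def by (cases "z = x") auto
    qed
  qed simp
  show "\<exists>\<mu>\<in>LFun {x}. l = \<mu> x" for l
    by (rule bexI[of _ "\<lambda>z. if z = x then l else bot"]) (simp_all add: LFun_def)
qed simp

context residuated_lattice
begin

lemma RST_reduct_two_object_context:
  "RST_reduct m imp {0, 1} {0} (\<lambda>x y. neg imp (two_object_context a x y)) {0} {0}"
proof -
  define \<psi> where "\<psi> = (\<lambda>x y. neg imp (two_object_context a x y))"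
  define F where "F = (\<lambda>\<mu>. all imp {0, 1} {0} \<psi> (ex m {0, 1} {0} \<psi> \<mu>))"
  define H where "H = (\<lambda>l x. if x = 0 then l else if x = (1::nat) then imp (neg imp a) l else bot)"
  have neg_bot: "neg imp bot = top"
    unfolding neg_def by (rule imp_self)
  have F_eq: "F \<mu> = H (sup (\<mu> 0) (m (\<mu> 1) (neg imp a)))" for \<mu>
    by (auto simp: F_def H_def all_def ex_def \<psi>_def two_object_context_def neg_bot
        mult_top_right imp_top_left)
  have H_fixed: "F (H l) = H l" for l
    by (simp add: F_eq) (simp add: H_def sup_absorb1 modus_ponens)
  have K_one: "Kset m imp {0} {0} \<psi> = LFun {0}"
    by (auto simp: Kset_def LFun_def all_def ex_def \<psi>_def two_object_context_def neg_bot
        mult_top_right imp_top_left)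
  have K_two: "Kset m imp {0, 1} {0} \<psi> = range H"
  proof
    show "Kset m imp {0, 1} {0} \<psi> \<subseteq> range H"
    proof
      fix \<mu> assume "\<mu> \<in> Kset m imp {0, 1} {0} \<psi>"
      then have "\<mu> = F \<mu>"
        by (simp add: Kset_def F_def)
      then show "\<mu> \<in> range H"
        unfolding F_eq by (rule ssubst) (rule rangeI)
    qed
    show "range H \<subseteq> Kset m imp {0, 1} {0} \<psi>"
    proof
      fix \<mu> assume "\<mu> \<in> range H"
      then obtain l where "\<mu> = H l" ..
      moreover have "H l \<in> LFun {0, 1}"
        by (simp add: H_def LFun_def)
      ultimately show "\<mu> \<in> Kset m imp {0, 1} {0} \<psi>"
        using H_fixed by (simp add: Kset_def F_def)
    qed
  qed
  have F_LFun: "F \<mu> = H (\<mu> 0)" if "\<mu> \<in> LFun {0}" for \<mu>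
    using that by (simp add: F_eq LFun_def mult_bot_left)
  have "bij_betw F (LFun {0}) (range H)"
  proof -
    have "inj H"
      by (rule inj_on_inverseI[where g = "\<lambda>\<mu>. \<mu> 0"]) (simp add: H_def)
    then have "bij_betw (H \<circ> (\<lambda>\<mu>. \<mu> 0)) (LFun {0}) (range H)"
      by (intro bij_betw_trans[OF bij_betw_LFun_singleton]) (simp add: bij_betw_def)
    then show ?thesis
      by (rule bij_betw_cong[THEN iffD1, rotated]) (simp add: F_LFun)
  qed
  moreover have "LOrd imp {0} p p' = LOrd imp {0, 1} (F p) (F p')"
    if "p \<in> LFun {0}" "p' \<in> LFun {0}" for p p'
    using that by (simp add: F_LFun LOrd_def H_def inf_absorb1 imp_le_prefix)
  ultimately show ?thesis
    unfolding RST_reduct_def L_iso_def \<psi>_def[symmetric] F_def[symmetric] K_one K_two by simp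
qed

lemma double_neg_if_FCA_reduct_two_object_context:
  assumes "FCA_reduct imp {0, 1} {0} (two_object_context a) {0} {0}"
  shows "neg imp (neg imp a) = a"
proof -
  define \<phi> where "\<phi> = two_object_context a"
  define E where "E = (\<lambda>\<mu>. down imp {0, 1} {0} \<phi> (up imp {0, 1} {0} \<phi> \<mu>))"
  have up_eq: "up imp {0, 1} {0} \<phi> \<mu> 0 = inf (neg imp (\<mu> 0)) (imp (\<mu> 1) a)" for \<mu>
    by (simp add: up_def \<phi>_def two_object_context_def neg_def)
  have E_eq: "E \<mu> = (\<lambda>x. if x = 0 then neg imp (up imp {0, 1} {0} \<phi> \<mu> 0)
      else if x = 1 then imp (up imp {0, 1} {0} \<phi> \<mu> 0) a else bot)" for \<mu>
    by (rule ext) (simp add: E_def down_def \<phi>_def two_object_context_def neg_def)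
  define \<nu> where "\<nu> = (\<lambda>x::nat. if x = 0 then neg imp a else if x = 1 then top else bot)"
  have up_\<nu>: "up imp {0, 1} {0} \<phi> \<nu> 0 = a"
    unfolding up_eq by (simp add: \<nu>_def imp_top_left double_neg_ge inf_absorb2)
  have "E \<nu> = \<nu>"
  proof
    fix x :: nat
    show "E \<nu> x = \<nu> x"
      unfolding E_eq up_\<nu> by (simp add: \<nu>_def imp_self)
  qed
  then have "\<nu> \<in> Mset imp {0, 1} {0} \<phi>"
    by (simp add: Mset_def E_def LFun_def \<nu>_def)
  with assms have "\<nu> \<in> E ` Mset imp {0} {0} \<phi>"
    unfolding FCA_reduct_def L_iso_def bij_betw_def \<phi>_def[symmetric] E_def[symmetric] by simp
  then obtain p where p: "p \<in> Mset imp {0} {0} \<phi>" and \<nu>_eq: "\<nu> = E p" ..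
  define t where "t = neg imp (p 0)"
  have "p 1 = bot"
    using p by (simp add: Mset_def LFun_def)
  then have "up imp {0, 1} {0} \<phi> p 0 = t"
    unfolding up_eq t_def by (simp add: imp_bot_left)
  then have t_neg: "neg imp t = neg imp a" and t_imp: "imp t a = top"
    using fun_cong[OF \<nu>_eq, of 0] fun_cong[OF \<nu>_eq, of 1] by (simp_all add: E_eq \<nu>_def)
  have "neg imp (neg imp a) = neg imp (neg imp t)"
    by (simp add: t_neg)
  also have "\<dots> = t"
    unfolding t_def by (rule triple_neg)
  also have "t \<le> a"
    using t_imp residuation[of top t a] mult_commute[of top t] mult_top_right[of t] by simp
  finally show ?thesis
    by (simp add: double_neg_ge order.antisym)
qed

end

theorem mainTheorem8:
  fixes m imp :: "'l::complete_lattice \<Rightarrow> 'l \<Rightarrow> 'l"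
  assumes "complete_residuated_lattice m imp"
  shows
    "((\<forall>a. neg imp (neg imp a) = a) \<longrightarrow>
        (\<forall>(X::'x set) (Y::'y set) (\<phi>::'x \<Rightarrow> 'y \<Rightarrow> 'l) X' Y'. X' \<subseteq> X \<longrightarrow> Y' \<subseteq> Y \<longrightarrow>
           (RST_reduct m imp X Y (\<lambda>x y. neg imp (\<phi> x y)) X' Y' \<longleftrightarrow> FCA_reduct imp X Y \<phi> X' Y')))
   \<and> ((\<forall>(X::'x set) (Y::'y set) (\<phi>::'x \<Rightarrow> 'y \<Rightarrow> 'l) X' Y'. X' \<subseteq> X \<longrightarrow> Y' \<subseteq> Y \<longrightarrow>
           (RST_reduct m imp X Y (\<lambda>x y. neg imp (\<phi> x y)) X' Y' \<longleftrightarrow> FCA_reduct imp X Y \<phi> X' Y'))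
       \<longrightarrow> (\<forall>(X::'x set) (Y::'y set) (\<phi>::'x \<Rightarrow> 'y \<Rightarrow> 'l) X' Y'. X' \<subseteq> X \<longrightarrow> Y' \<subseteq> Y \<longrightarrow>
           RST_reduct m imp X Y (\<lambda>x y. neg imp (\<phi> x y)) X' Y' \<longrightarrow> FCA_reduct imp X Y \<phi> X' Y'))
   \<and> ((\<forall>(X::nat set) (Y::nat set) (\<phi>::nat \<Rightarrow> nat \<Rightarrow> 'l) X' Y'. X' \<subseteq> X \<longrightarrow> Y' \<subseteq> Y \<longrightarrow>
           RST_reduct m imp X Y (\<lambda>x y. neg imp (\<phi> x y)) X' Y' \<longrightarrow> FCA_reduct imp X Y \<phi> X' Y')
       \<longrightarrow> (\<forall>a. neg imp (neg imp a) = a))"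
proof -
  interpret residuated_lattice m imp
    by (rule residuated_lattice.intro) (rule assms)
  have double_neg_if_RST_imp_FCA: "neg imp (neg imp a) = a"
    if "\<forall>(X::nat set) (Y::nat set) (\<phi>::nat \<Rightarrow> nat \<Rightarrow> 'l) X' Y'. X' \<subseteq> X \<longrightarrow> Y' \<subseteq> Y \<longrightarrow>
      RST_reduct m imp X Y (\<lambda>x y. neg imp (\<phi> x y)) X' Y' \<longrightarrow> FCA_reduct imp X Y \<phi> X' Y'" for a
    by (rule double_neg_if_FCA_reduct_two_object_context,
        rule that[rule_format, OF _ _ RST_reduct_two_object_context]) auto
  show ?thesis
  proof (intro conjI impI allI)
    show "RST_reduct m imp X Y (\<lambda>x y. neg imp (\<phi> x y)) X' Y' \<longleftrightarrow> FCA_reduct imp X Y \<phi> X' Y'"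
      if "\<forall>a. neg imp (neg imp a) = a" for X :: "'x set" and Y :: "'y set" and \<phi> X' Y'
      using that by (simp add: RST_reduct_neg_iff_FCA_reduct)
  qed (blast, erule double_neg_if_RST_imp_FCA)
qed

end
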